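(* Let $B\subseteq\mathbb{Z}_q^n$ satisfy $|B|\ge q^{n-b}$ for some $b\in\mathbb{N}$. Then for every $\mathbf{v}\in\mathbb{Z}_q^n$ and every integer $h$ with $b<h\le n$, $$\sum_{\mathbf{u}\in\mathbb{Z}_q^n:\ \|\mathbf{u}+\mathbf{v}\|_0=h}\frac{q^n}{|B|}\left|\widehat{\mathbf{1}_B}(\mathbf{u})\right|\le\left(\frac{2q^2e^2n}{h}\right)^{h/2}.$$
   Context: For $f:\mathbb{Z}_q^n\to\mathbb{C}$, $\widehat f(\mathbf{u})=q^{-n}\sum_{\mathbf{a}\in\mathbb{Z}_q^n}f(\mathbf{a})\omega^{-\mathbf{u}^\top\mathbf{a}}$ with $\omega=e^{2\pi i/q}$. $\mathbf{1}_B$ is the indicator function of $B$, and $\|\mathbf{u}\|_0$ is the number of nonzero coordinates of $\mathbf{u}$. *)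

theory Defs
  imports "HOL-Analysis.Analysis"
begin

text \<open>Z_q^n is modelled as extensional functions {..<n} -> {..<q}.\<close>
definition Zqn :: "nat \<Rightarrow> nat \<Rightarrow> (nat \<Rightarrow> nat) set" where
  "Zqn q n = PiE {..<n} (\<lambda>_. {..<q})"

definition vadd :: "nat \<Rightarrow> nat \<Rightarrow> (nat \<Rightarrow> nat) \<Rightarrow> (nat \<Rightarrow> nat) \<Rightarrow> (nat \<Rightarrow> nat)" where
  "vadd q n u v = (\<lambda>i\<in>{..<n}. (u i + v i) mod q)"

definition hw :: "nat \<Rightarrow> (nat \<Rightarrow> nat) \<Rightarrow> nat" where
  "hw n u = card {i\<in>{..<n}. u i \<noteq> 0}"

definition omega :: "nat \<Rightarrow> complex" where
  "omega q = exp (2 * pi * \<i> / of_nat q)"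

definition fourier :: "nat \<Rightarrow> nat \<Rightarrow> ((nat \<Rightarrow> nat) \<Rightarrow> complex) \<Rightarrow> (nat \<Rightarrow> nat) \<Rightarrow> complex" where
  "fourier q n f u = (1 / of_nat q ^ n) *
     (\<Sum>a\<in>Zqn q n. f a * inverse (omega q ^ ((\<Sum>i<n. u i * a i) mod q)))"

end

theory Submission
  imports Defs
begin

text \<open>
  By Cauchy--Schwarz, the sum of \<open>|\<widehat>\<one>\<^sub>B(u)|\<close> over the set \<open>S\<close> of all \<open>u\<close> with
  \<open>\<parallel>u + v\<parallel>\<^sub>0 = h\<close> is at most \<open>\<surd>|S|\<close> times the \<open>L\<^sup>2\<close>-mass of \<open>\<widehat>\<one>\<^sub>B\<close>, which by
  Parseval equals \<open>\<surd>(|B|/q\<^sup>n)\<close>. Hence the square of the left-hand side is at most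
  \<open>(q\<^sup>n/|B|)|S| \<le> q\<^sup>b \<cdot> (n choose h) q\<^sup>h\<close>, and with \<open>(n choose h) \<le> (en/h)\<^sup>h\<close> and
  \<open>b < h\<close> this is at most \<open>(q\<^sup>2 e n/h)\<^sup>h\<close>.
\<close>

lemma power_self_div_fact_le_exp: "real h ^ h / fact h \<le> exp (real h)"
proof -
  have "(\<lambda>k. real h ^ k / fact k) sums exp (real h)"
    using exp_converges[of "real h"] by (simp add: divide_inverse_commute)
  hence "summable (\<lambda>k. real h ^ k / fact k)" "exp (real h) = (\<Sum>k. real h ^ k / fact k)"
    by (auto simp: sums_iff)
  moreover from this(1) have "(\<Sum>k\<in>{h}. real h ^ k / fact k) \<le> (\<Sum>k. real h ^ k / fact k)"
    by (rule sum_le_suminf) auto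
  ultimately show ?thesis by simp
qed

lemma binomial_le_exp_pow:
  assumes "h > 0"
  shows "real (n choose h) \<le> (exp 1 * real n / real h) ^ h"
proof -
  have "real (n choose h) * fact h \<le> real n ^ h"
    by (metis binomial_fact_pow of_nat_fact of_nat_le_iff of_nat_mult of_nat_power)
  hence "real (n choose h) \<le> real n ^ h / fact h" by (simp add: field_simps)
  also have "\<dots> = (real n / real h) ^ h * (real h ^ h / fact h)"
    using assms by (simp add: power_divide)
  also have "\<dots> \<le> (real n / real h) ^ h * exp (real h)"
    by (intro mult_left_mono power_self_div_fact_le_exp) auto
  also have "exp (real h) = exp 1 ^ h"
    using exp_of_nat_mult[of h "1::real"] by simp
  also have "(real n / real h) ^ h * exp 1 ^ h = (exp 1 * real n / real h) ^ h"
    by (simp add: power_mult_distrib[symmetric] mult.commute)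
  finally show ?thesis .
qed

lemma mod_add_right_cancel_int: "(x + c) mod q = (y + c) mod (q::int) \<Longrightarrow> x mod q = y mod q"
  by (metis add_diff_cancel_right' mod_diff_left_eq)

lemma mod_add_right_cancel_less:
  assumes "(a + c) mod q = (b + c) mod (q::nat)" "a < q" "b < q"
  shows "a = b"
proof -
  have "(int a + int c) mod int q = (int b + int c) mod int q"
    using assms(1) by (metis of_nat_add zmod_int)
  hence "int a mod int q = int b mod int q" by (rule mod_add_right_cancel_int)
  thus ?thesis using assms(2,3) by (simp add: zmod_int)
qed

lemma finite_Zqn: "finite (Zqn q n)"
  by (simp add: Zqn_def finite_PiE)

lemma Zqn_eqI:
  assumes "a \<in> Zqn q n" "b \<in> Zqn q n" "\<And>i. i < n \<Longrightarrow> a i = b i"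
  shows "a = b"
  using assms by (intro PiE_ext[of a "{..<n}" "\<lambda>_. {..<q}"]) (auto simp: Zqn_def)

lemma vadd_in_Zqn: "q > 0 \<Longrightarrow> vadd q n u v \<in> Zqn q n"
  by (auto simp: vadd_def Zqn_def PiE_iff)

lemma inj_on_vadd: "inj_on (\<lambda>u. vadd q n u v) (Zqn q n)"
proof (rule inj_onI)
  fix x y assume x: "x \<in> Zqn q n" and y: "y \<in> Zqn q n" and eq: "vadd q n x v = vadd q n y v"
  show "x = y"
  proof (rule Zqn_eqI[OF x y])
    fix i assume "i < n"
    with fun_cong[OF eq, of i] have "(x i + v i) mod q = (y i + v i) mod q" by (simp add: vadd_def)
    moreover have "x i < q" "y i < q" using x y \<open>i < n\<close> by (auto simp: Zqn_def PiE_iff)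
    ultimately show "x i = y i" by (rule mod_add_right_cancel_less)
  qed
qed

text \<open>A vector of weight \<open>h\<close> is determined by its support and its restriction to it.\<close>

lemma card_hw_eq_le: "card {w\<in>Zqn q n. hw n w = h} \<le> (n choose h) * q ^ h"
proof -
  define supp where "supp w = {i\<in>{..<n}. w i \<noteq> 0}" for w :: "nat \<Rightarrow> nat"
  define Supps where "Supps = {I. I \<subseteq> {..<n} \<and> card I = h}"
  define T where "T = Sigma Supps (\<lambda>I. PiE I (\<lambda>_. {..<q}))"
  define enc where "enc w = (supp w, restrict w (supp w))" for w
  have finite_mem_Supps: "finite I" if "I \<in> Supps" for I
    using that finite_subset[of I "{..<n}"] by (auto simp: Supps_def)
  have "finite Supps"
    unfolding Supps_def by (simp add: finite_Collect_subsets)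
  have "inj_on enc {w\<in>Zqn q n. hw n w = h}"
  proof (rule inj_onI)
    fix w1 w2 assume w1: "w1 \<in> {w\<in>Zqn q n. hw n w = h}" and w2: "w2 \<in> {w\<in>Zqn q n. hw n w = h}"
      and "enc w1 = enc w2"
    then obtain supp_eq: "supp w1 = supp w2"
      and restrict_eq: "restrict w1 (supp w1) = restrict w2 (supp w2)"
      unfolding enc_def by blast
    show "w1 = w2"
    proof (rule Zqn_eqI)
      fix i assume "i < n"
      show "w1 i = w2 i"
      proof (cases "i \<in> supp w1")
        case True
        with supp_eq show ?thesis using fun_cong[OF restrict_eq, of i] by simp
      next
        case False
        with supp_eq have "i \<notin> supp w2" by simp
        with False \<open>i < n\<close> show ?thesis by (simp add: supp_def)
      qed
    qed (use w1 w2 in auto)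
  qed
  moreover have "enc ` {w\<in>Zqn q n. hw n w = h} \<subseteq> T"
  proof (rule image_subsetI)
    fix w assume "w \<in> {w\<in>Zqn q n. hw n w = h}"
    then have w: "w \<in> Zqn q n" "hw n w = h" by auto
    then have "restrict w (supp w) \<in> PiE (supp w) (\<lambda>_. {..<q})"
      by (auto simp: restrict_PiE_iff Zqn_def PiE_iff supp_def)
    moreover have "supp w \<in> Supps" using w(2) by (auto simp: Supps_def supp_def hw_def)
    ultimately show "enc w \<in> T" by (simp add: enc_def T_def)
  qed
  moreover have "finite T"
    unfolding T_def using \<open>finite Supps\<close> by (intro finite_SigmaI finite_PiE) (simp_all add: finite_mem_Supps)
  ultimately have "card {w\<in>Zqn q n. hw n w = h} \<le> card T"
    by (rule card_inj_on_le)
  also have "card T = (\<Sum>I\<in>Supps. card (PiE I (\<lambda>_. {..<q})))"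
    unfolding T_def using \<open>finite Supps\<close> finite_mem_Supps by (simp add: card_SigmaI finite_PiE)
  also have "\<dots> = (\<Sum>I\<in>Supps. q ^ h)"
    using finite_mem_Supps by (intro sum.cong refl) (simp add: card_PiE Supps_def)
  also have "\<dots> = (n choose h) * q ^ h"
    using n_subsets[of "{..<n}" h] by (simp add: Supps_def)
  finally show ?thesis .
qed

lemma card_hw_vadd_eq_le:
  assumes "q > 0"
  shows "card {u\<in>Zqn q n. hw n (vadd q n u v) = h} \<le> (n choose h) * q ^ h"
proof -
  have "card {u\<in>Zqn q n. hw n (vadd q n u v) = h} \<le> card {w\<in>Zqn q n. hw n w = h}"
  proof (rule card_inj_on_le)
    show "inj_on (\<lambda>u. vadd q n u v) {u\<in>Zqn q n. hw n (vadd q n u v) = h}"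
      by (rule inj_on_subset[OF inj_on_vadd]) auto
    show "(\<lambda>u. vadd q n u v) ` {u\<in>Zqn q n. hw n (vadd q n u v) = h} \<subseteq> {w\<in>Zqn q n. hw n w = h}"
      using vadd_in_Zqn[OF assms] by auto
  qed (simp add: finite_Zqn)
  also have "\<dots> \<le> (n choose h) * q ^ h" by (rule card_hw_eq_le)
  finally show ?thesis .
qed

definition addchar :: "nat \<Rightarrow> int \<Rightarrow> complex" where
  "addchar q x = exp (2 * pi * \<i> * of_int x / of_nat q)"

lemma addchar_zero [simp]: "addchar q 0 = 1"
  by (simp add: addchar_def)

lemma addchar_add: "addchar q (x + y) = addchar q x * addchar q y"
  unfolding addchar_def by (simp add: exp_add[symmetric] distrib_left add_divide_distrib)

lemma addchar_minus: "addchar q (- x) = inverse (addchar q x)"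
  unfolding addchar_def by (simp add: exp_minus[symmetric])

lemma cnj_addchar: "cnj (addchar q x) = addchar q (- x)"
  unfolding addchar_def by (simp add: exp_cnj)

lemma addchar_sum: "addchar q (\<Sum>i\<in>A. f i) = (\<Prod>i\<in>A. addchar q (f i))"
  by (induction A rule: infinite_finite_induct) (simp_all add: addchar_add)

lemma addchar_of_nat_mult: "addchar q (int k * d) = addchar q d ^ k"
  unfolding addchar_def using exp_of_nat_mult[of k "2 * pi * \<i> * of_int d / of_nat q"]
  by (simp add: algebra_simps)

lemma omega_power: "omega q ^ k = addchar q (int k)"
  using addchar_of_nat_mult[of q k 1] by (simp add: omega_def addchar_def)

lemma addchar_eq_1_iff:
  assumes "q > 0"
  shows "addchar q d = 1 \<longleftrightarrow> int q dvd d"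
proof -
  have "addchar q d = 1 \<longleftrightarrow> (\<exists>m::int. 2 * pi * real_of_int d / real q = 2 * real_of_int m * pi)"
    unfolding addchar_def exp_eq_1 by simp
  also have "\<dots> \<longleftrightarrow> (\<exists>m::int. real_of_int d = real_of_int (int q * m))"
    using assms by (intro ex_cong1) (auto simp: field_simps)
  also have "\<dots> \<longleftrightarrow> int q dvd d" by (auto simp: dvd_def simp del: of_int_mult)
  finally show ?thesis .
qed

lemma addchar_mod:
  assumes "q > 0"
  shows "addchar q (x mod int q) = addchar q x"
proof -
  have "addchar q x = addchar q (x mod int q) * addchar q (int q * (x div int q))"
    by (metis addchar_add mod_mult_div_eq)
  also have "addchar q (int q * (x div int q)) = 1"
    using assms by (simp add: addchar_eq_1_iff)
  finally show ?thesis by simp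
qed

lemma sum_addchar_mult:
  assumes "q > 0" "a < q" "b < q"
  shows "(\<Sum>k<q. addchar q (int k * (int b - int a))) = (if a = b then of_nat q else 0)"
proof -
  let ?z = "addchar q (int b - int a)"
  have "(\<Sum>k<q. addchar q (int k * (int b - int a))) = (\<Sum>k<q. ?z ^ k)"
    by (simp add: addchar_of_nat_mult)
  also have "\<dots> = (if ?z = 1 then of_nat q else (1 - ?z ^ q) / (1 - ?z))"
    by (rule sum_gp_strict)
  also have "?z ^ q = 1"
    using assms(1) by (simp add: addchar_of_nat_mult[symmetric] addchar_eq_1_iff)
  also have "?z = 1 \<longleftrightarrow> a = b"
  proof
    assume "?z = 1"
    then have "int q dvd int b - int a" using assms(1) by (simp add: addchar_eq_1_iff)
    moreover have "\<bar>int b - int a\<bar> < int q" using assms(2,3) by linarith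
    ultimately have "int b - int a = 0"
      using dvd_imp_le_int[of "int b - int a" "int q"] by fastforce
    then show "a = b" by simp
  qed simp
  finally show ?thesis by simp
qed

definition zdot :: "nat \<Rightarrow> (nat \<Rightarrow> nat) \<Rightarrow> (nat \<Rightarrow> nat) \<Rightarrow> int" where
  "zdot n u a = (\<Sum>i<n. int (u i) * int (a i))"

lemma sum_addchar_zdot_diff:
  assumes "q > 0" "a \<in> Zqn q n" "b \<in> Zqn q n"
  shows "(\<Sum>u\<in>Zqn q n. addchar q (zdot n u b - zdot n u a)) = (if a = b then of_nat q ^ n else 0)"
proof -
  have "(\<Sum>u\<in>Zqn q n. addchar q (zdot n u b - zdot n u a))
      = (\<Sum>u\<in>Zqn q n. \<Prod>i<n. addchar q (int (u i) * (int (b i) - int (a i))))"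
    by (simp add: zdot_def sum_subtractf[symmetric] right_diff_distrib addchar_sum)
  also have "\<dots> = (\<Prod>i<n. \<Sum>k<q. addchar q (int k * (int (b i) - int (a i))))"
    unfolding Zqn_def by (rule prod_sum_PiE[symmetric]) auto
  also have "\<dots> = (\<Prod>i<n. if a i = b i then of_nat q else 0)"
    using assms by (intro prod.cong refl sum_addchar_mult) (auto simp: Zqn_def PiE_iff)
  also have "\<dots> = (if a = b then of_nat q ^ n else 0)"
  proof (cases "\<forall>i<n. a i = b i")
    case True
    then show ?thesis using Zqn_eqI[OF assms(2,3)] by simp
  next
    case False
    then show ?thesis by (auto simp: prod_zero_iff)
  qed
  finally show ?thesis .
qed

lemma fourier_eq_sum_addchar:
  assumes "q > 0"
  shows "fourier q n f u = (\<Sum>a\<in>Zqn q n. f a * addchar q (- zdot n u a)) / of_nat q ^ n"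
proof -
  have "inverse (omega q ^ ((\<Sum>i<n. u i * a i) mod q)) = addchar q (- zdot n u a)" for a
    using assms by (simp add: omega_power zmod_int addchar_mod addchar_minus zdot_def)
  then show ?thesis by (simp add: fourier_def)
qed

lemma parseval:
  assumes "q > 0"
  shows "(\<Sum>u\<in>Zqn q n. cmod (fourier q n f u) ^ 2) = (\<Sum>a\<in>Zqn q n. cmod (f a) ^ 2) / real q ^ n"
proof -
  define G where "G u = (\<Sum>a\<in>Zqn q n. f a * addchar q (- zdot n u a))" for u
  have norm_G_sq: "complex_of_real (cmod (G u) ^ 2)
      = (\<Sum>a\<in>Zqn q n. \<Sum>b\<in>Zqn q n. f a * cnj (f b) * addchar q (zdot n u b - zdot n u a))" for u
  proof -
    have "complex_of_real (cmod (G u) ^ 2) = G u * cnj (G u)" by (rule complex_norm_square)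
    also have "\<dots> = (\<Sum>a\<in>Zqn q n. \<Sum>b\<in>Zqn q n.
        (f a * addchar q (- zdot n u a)) * (cnj (f b) * addchar q (zdot n u b)))"
      by (simp add: G_def sum_product cnj_addchar)
    also have "\<dots> = (\<Sum>a\<in>Zqn q n. \<Sum>b\<in>Zqn q n. f a * cnj (f b) * addchar q (zdot n u b - zdot n u a))"
      by (simp add: addchar_add[symmetric] ac_simps)
    finally show ?thesis .
  qed
  have "complex_of_real (\<Sum>u\<in>Zqn q n. cmod (G u) ^ 2)
      = (\<Sum>u\<in>Zqn q n. \<Sum>a\<in>Zqn q n. \<Sum>b\<in>Zqn q n.
           f a * cnj (f b) * addchar q (zdot n u b - zdot n u a))"
    unfolding of_real_sum by (rule sum.cong[OF refl norm_G_sq])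
  also have "\<dots> = (\<Sum>a\<in>Zqn q n. \<Sum>b\<in>Zqn q n. \<Sum>u\<in>Zqn q n.
           f a * cnj (f b) * addchar q (zdot n u b - zdot n u a))"
    by (subst sum.swap) (rule sum.cong[OF refl sum.swap])
  also have "\<dots> = (\<Sum>a\<in>Zqn q n. \<Sum>b\<in>Zqn q n.
           f a * cnj (f b) * (\<Sum>u\<in>Zqn q n. addchar q (zdot n u b - zdot n u a)))"
    by (simp add: sum_distrib_left)
  also have "\<dots> = (\<Sum>a\<in>Zqn q n. \<Sum>b\<in>Zqn q n. if a = b then f a * cnj (f b) * of_nat q ^ n else 0)"
    using assms by (intro sum.cong refl) (simp add: sum_addchar_zdot_diff)
  also have "\<dots> = (\<Sum>a\<in>Zqn q n. f a * cnj (f a) * of_nat q ^ n)"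
    by (simp add: finite_Zqn)
  also have "\<dots> = complex_of_real ((\<Sum>a\<in>Zqn q n. cmod (f a) ^ 2) * real q ^ n)"
    by (simp only: of_real_mult of_real_sum complex_norm_square sum_distrib_right) simp
  finally have "(\<Sum>u\<in>Zqn q n. cmod (G u) ^ 2) = (\<Sum>a\<in>Zqn q n. cmod (f a) ^ 2) * real q ^ n"
    by (simp only: of_real_eq_iff)
  moreover have "cmod (fourier q n f u) ^ 2 = cmod (G u) ^ 2 / (real q ^ n) ^ 2" for u
    using assms by (simp add: fourier_eq_sum_addchar G_def norm_divide norm_power power_divide)
  ultimately show ?thesis
    using assms by (simp add: sum_divide_distrib[symmetric] power2_eq_square)
qed

lemma parseval_indicator:
  assumes "q > 0" "B \<subseteq> Zqn q n"
  shows "(\<Sum>u\<in>Zqn q n. cmod (fourier q n (indicator B) u) ^ 2) = real (card B) / real q ^ n"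
proof -
  have "cmod (indicator B a :: complex) ^ 2 = indicator B a" for a
    by (simp add: indicator_def)
  then have "(\<Sum>a\<in>Zqn q n. cmod (indicator B a :: complex) ^ 2) = real (card (Zqn q n \<inter> B))"
    by (simp add: indicator_def sum_of_bool_eq Int_def finite_Zqn)
  with assms show ?thesis by (simp add: parseval Int_absorb1)
qed

lemma normalized_fourier_indicator_sum_sq_le:
  assumes "q > 0" "B \<subseteq> Zqn q n" "card B > 0" "S \<subseteq> Zqn q n"
  shows "(\<Sum>u\<in>S. real q ^ n / real (card B) * cmod (fourier q n (indicator B) u)) ^ 2
         \<le> real q ^ n / real (card B) * real (card S)"
proof -
  let ?g = "\<lambda>u. cmod (fourier q n (indicator B) u)" and ?c = "real q ^ n / real (card B)"
  have "(\<Sum>u\<in>S. ?g u) ^ 2 \<le> (\<Sum>u\<in>S. ?g u ^ 2) * card S"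
    by (rule sum_squared_le_sum_of_squares)
  also have "\<dots> \<le> (\<Sum>u\<in>Zqn q n. ?g u ^ 2) * card S"
    by (intro mult_right_mono sum_mono2[OF finite_Zqn assms(4)]) auto
  also have "\<dots> = real (card S) / ?c"
    using assms(1,2) by (simp add: parseval_indicator)
  finally have "?c ^ 2 * (\<Sum>u\<in>S. ?g u) ^ 2 \<le> ?c ^ 2 * (real (card S) / ?c)"
    by (intro mult_left_mono) auto
  also have "\<dots> = ?c * real (card S)"
    using assms(1,3) by (simp add: power2_eq_square)
  also have "?c ^ 2 * (\<Sum>u\<in>S. ?g u) ^ 2 = (\<Sum>u\<in>S. ?c * ?g u) ^ 2"
    by (simp only: sum_distrib_left[symmetric] power_mult_distrib)
  finally show ?thesis .
qed

lemma power_eq_powr_half_squared: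
  fixes x :: real
  assumes "x > 0"
  shows "x ^ n = (x powr (real n / 2)) ^ 2"
proof -
  have "x ^ n = x powr (real n / 2 + real n / 2)"
    using assms by (simp add: powr_realpow)
  also have "\<dots> = (x powr (real n / 2)) ^ 2"
    by (simp only: powr_add power2_eq_square)
  finally show ?thesis .
qed

lemma density_times_count_le_power:
  assumes "q > 0" "b \<le> h"
  shows "real q ^ b * ((exp 1 * real n / real h) ^ h * real q ^ h)
         \<le> (2 * real q ^ 2 * exp 1 ^ 2 * real n / real h) ^ h"
proof -
  have "real q ^ b * ((exp 1 * real n / real h) ^ h * real q ^ h)
      \<le> real q ^ h * ((exp 1 * real n / real h) ^ h * real q ^ h)"
    using assms by (intro mult_right_mono power_increasing) auto
  also have "\<dots> = (exp 1 * real n * real q ^ 2 / real h) ^ h"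
    by (simp add: power_mult_distrib power_divide power_mult[symmetric] power_add[symmetric] mult_2)
  also have "\<dots> \<le> (2 * real q ^ 2 * exp 1 ^ 2 * real n / real h) ^ h"
  proof (rule power_mono)
    have "exp (1::real) \<le> exp 1 ^ 2"
      using mult_left_mono[of 1 "exp (1::real)" "exp 1"] by (simp add: power2_eq_square)
    then have "exp (1::real) \<le> 2 * exp 1 ^ 2"
      using zero_le_power2[of "exp (1::real)"] by linarith
    then have "exp 1 * (real n * real q ^ 2) \<le> (2 * exp 1 ^ 2) * (real n * real q ^ 2)"
      by (rule mult_right_mono) simp
    then show "exp 1 * real n * real q ^ 2 / real h \<le> 2 * real q ^ 2 * exp 1 ^ 2 * real n / real h"
      by (intro divide_right_mono) (simp_all add: ac_simps)
  qed simp
  finally show ?thesis .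
qed

theorem lemma6p6:
  fixes q n b h :: nat and B :: "(nat \<Rightarrow> nat) set" and v :: "nat \<Rightarrow> nat"
  assumes "B \<subseteq> Zqn q n"
    and "real (card B) \<ge> real q ^ (n - b)"
    and "v \<in> Zqn q n"
    and "b < h" and "h \<le> n"
  shows "(\<Sum>u\<in>{u\<in>Zqn q n. hw n (vadd q n u v) = h}.
            real q ^ n / real (card B) * cmod (fourier q n (indicator B) u))
         \<le> (2 * real q ^ 2 * exp 1 ^ 2 * real n / real h) powr (real h / 2)"
proof (cases "q > 0 \<and> card B > 0")
  case False
  moreover have "Zqn 0 n = {}"
    using assms(4,5) by (auto simp: Zqn_def PiE_eq_empty_iff intro!: exI[of _ 0])
  ultimately show ?thesis by auto
next
  case True
  let ?S = "{u\<in>Zqn q n. hw n (vadd q n u v) = h}"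
  have "real q ^ n = real q ^ (n - b) * real q ^ b"
    using assms(4,5) by (simp add: power_add[symmetric])
  then have density: "real q ^ n / real (card B) \<le> real q ^ b"
    using assms(2) True by (simp add: divide_le_eq mult_right_mono)
  have "real (card ?S) \<le> real (n choose h) * real q ^ h"
    using card_hw_vadd_eq_le[of q n v h] True by (simp flip: of_nat_mult of_nat_power)
  also have "\<dots> \<le> (exp 1 * real n / real h) ^ h * real q ^ h"
    using assms(4) by (intro mult_right_mono binomial_le_exp_pow) auto
  finally have card_S: "real (card ?S) \<le> (exp 1 * real n / real h) ^ h * real q ^ h" .
  have "(\<Sum>u\<in>?S. real q ^ n / real (card B) * cmod (fourier q n (indicator B) u)) ^ 2
      \<le> real q ^ n / real (card B) * real (card ?S)"
    using True assms(1) by (intro normalized_fourier_indicator_sum_sq_le) auto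
  also have "\<dots> \<le> real q ^ b * ((exp 1 * real n / real h) ^ h * real q ^ h)"
    using density card_S by (intro mult_mono) auto
  also have "\<dots> \<le> (2 * real q ^ 2 * exp 1 ^ 2 * real n / real h) ^ h"
    using True assms(4) by (intro density_times_count_le_power) auto
  also have "\<dots> = ((2 * real q ^ 2 * exp 1 ^ 2 * real n / real h) powr (real h / 2)) ^ 2"
    using True assms(4,5) by (intro power_eq_powr_half_squared) auto
  finally show ?thesis
    by (rule power2_le_imp_le) simp
qed

end
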